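(* Assume $\operatorname{add}(\mathcal N)=\operatorname{cov}(\mathcal N)$. Then $\mathcal{ND}_{\operatorname{add}(\mathcal N)}$ is strongly $\mathfrak c$-algebrable in $\left(\mathbb R^{[0,1]}\right)^{\operatorname{add}(\mathcal N)}$.
   Context: For a regular infinite cardinal $\kappa$, a $\kappa$-sequence $(x_\alpha)_{\alpha<\kappa}$ converges to $x$ if for every neighbourhood $U$ of $x$ there is $\alpha_0<\kappa$ with $x_\alpha\in U$ for all $\alpha_0<\alpha<\kappa$; $\left(\mathbb R^{[0,1]}\right)^{\kappa}$ is the commutative real algebra of $\kappa$-sequences of functions $[0,1]\to\mathbb R$ with indexwise operations. $\lambda$ is Lebesgue measure, $\mathcal N$ the null subsets of $[0,1]$; $\operatorname{add}(\mathcal N)$ the least cardinality of a family of null sets with non-null union, $\operatorname{cov}(\mathcal N)$ the least cardinality of a family of null sets covering $[0,1]$. $\mathcal{ND}_{\kappa}$: $\kappa$-sequences of Lebesgue measurable $f_\alpha:[0,1]\to\mathbb R$ such that there is an integrable $g$ with $|f_\alpha|\le g$ a.e. for all $\alpha$, $f_\alpha\to f$ a.e. for some integrable $f$, and $\int|f_\alpha-f|\,d\lambda\not\to0$. $S$ is strongly $\mu$-algebrable if there is a set $X$ of $\mu$ algebraically independent elements such that every nonzero element of the (non-unital) algebra generated by $X$ belongs to $S$. *)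

theory Defs
  imports "HOL-Analysis.Analysis"
begin

definition nullsets01 :: "real set set" where
  "nullsets01 = {A. A \<subseteq> {0..1} \<and> A \<in> null_sets lebesgue}"

definition is_addN :: "'i set \<Rightarrow> bool" where
  "is_addN I \<longleftrightarrow>
     (\<exists>F. F \<subseteq> nullsets01 \<and> \<Union>F \<notin> nullsets01 \<and> (card_of F, card_of I) \<in> ordIso) \<and>
     (\<forall>F. F \<subseteq> nullsets01 \<and> (card_of F, card_of I) \<in> ordLess \<longrightarrow> \<Union>F \<in> nullsets01)"

definition is_covN :: "'i set \<Rightarrow> bool" where
  "is_covN I \<longleftrightarrow>
     (\<exists>F. F \<subseteq> nullsets01 \<and> \<Union>F = {0..1} \<and> (card_of F, card_of I) \<in> ordIso) \<and>
     (\<forall>F. F \<subseteq> nullsets01 \<and> (card_of F, card_of I) \<in> ordLess \<longrightarrow> \<Union>F \<noteq> {0..1})"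

text \<open>Convergence of a kappa-sequence indexed by the well-order r (the initial ordinal kappa).\<close>
definition kconv :: "'i rel \<Rightarrow> ('i \<Rightarrow> 'b::topological_space) \<Rightarrow> 'b \<Rightarrow> bool" where
  "kconv r x L \<longleftrightarrow>
     (\<forall>U. open U \<and> L \<in> U \<longrightarrow> (\<exists>a0. \<forall>a. (a0, a) \<in> r \<and> a \<noteq> a0 \<longrightarrow> x a \<in> U))"

definition ND :: "'i rel \<Rightarrow> ('i \<Rightarrow> real \<Rightarrow> real) set" where
  "ND r = {F. (\<forall>a. F a \<in> borel_measurable (lebesgue_on {0..1})) \<and>
     (\<exists>g. integrable (lebesgue_on {0..1}) g \<and>
          (\<forall>a. AE t in lebesgue_on {0..1}. \<bar>F a t\<bar> \<le> g t)) \<and>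
     (\<exists>f. integrable (lebesgue_on {0..1}) f \<and>
          (AE t in lebesgue_on {0..1}. kconv r (\<lambda>a. F a t) (f t)) \<and>
          \<not> kconv r (\<lambda>a. LINT t|lebesgue_on {0..1}. \<bar>F a t - f t\<bar>) 0)}"

text \<open>Polynomials without constant term over a set of generators: coefficient functions c on
  monomials m (exponent functions with finite nonempty support); evaluation in the algebra
  of kappa-sequences of functions with indexwise (and pointwise) operations.\<close>
definition poly_eval :: "((('i \<Rightarrow> real \<Rightarrow> real) \<Rightarrow> nat) \<Rightarrow> real) \<Rightarrow> ('i \<Rightarrow> real \<Rightarrow> real)" where
  "poly_eval c = (\<lambda>a t. \<Sum>m\<in>{m. c m \<noteq> 0}. c m * (\<Prod>g\<in>{g. m g \<noteq> 0}. (g a t) ^ m g))"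

definition nonconst_poly_over :: "('i \<Rightarrow> real \<Rightarrow> real) set \<Rightarrow> ((('i \<Rightarrow> real \<Rightarrow> real) \<Rightarrow> nat) \<Rightarrow> real) \<Rightarrow> bool" where
  "nonconst_poly_over X c \<longleftrightarrow> finite {m. c m \<noteq> 0} \<and> {m. c m \<noteq> 0} \<noteq> {} \<and>
     (\<forall>m. c m \<noteq> 0 \<longrightarrow> finite {g. m g \<noteq> 0} \<and> {g. m g \<noteq> 0} \<noteq> {} \<and> {g. m g \<noteq> 0} \<subseteq> X)"

text \<open>Strong continuum-algebrability of S inside (R^[0,1])^kappa: elements of the ambient algebra
  are represented by functions vanishing outside [0,1]; X is algebraically independent
  (no nonzero polynomial without constant term vanishes on X) and every such polynomial
  value lies in S.\<close>
definition strongly_c_algebrable :: "('i \<Rightarrow> real \<Rightarrow> real) set \<Rightarrow> bool" where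
  "strongly_c_algebrable S \<longleftrightarrow>
     (\<exists>X. (\<forall>G\<in>X. \<forall>a t. t \<notin> {0..1} \<longrightarrow> G a t = 0) \<and>
          (card_of X, card_of (UNIV :: real set)) \<in> ordIso \<and>
          (\<forall>c. nonconst_poly_over X c \<longrightarrow> (\<exists>a t. poly_eval c a t \<noteq> 0) \<and> poly_eval c \<in> S))"

end

(*
  Enumerate a cover of [0,1] by kappa = add(N) = cov(N) null sets as (N_b)_{b<kappa} and put
  B_a = (UN b<a. N_b).  Each B_a is null, as a union of fewer than add(N) null sets, and every
  t in [0,1] lies in B_a for all large a.  For x in a Hamel basis of R over Q, which has size c,
  let the generator G_x have a-th term t |-> exp (x t) on [0,1] - B_a and 0 elsewhere.  A
  polynomial without constant term in distinct generators then has a-th term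
  q(t) = (SUM m. c_m exp (lambda_m t)) on [0,1] - B_a and 0 elsewhere, with pairwise distinct
  frequencies lambda_m by the independence of the basis, so q is not identically zero on
  (0,1), exponentials with distinct frequencies being linearly independent.  The
  sequence is dominated by |q| and tends to 0 everywhere on [0,1], yet every term has
  L1-norm equal to the integral of |q|, which is positive.
*)
theory Submission
  imports Defs "HOL-Algebra.Free_Abelian_Groups"
begin

(* Free_Abelian_Groups is imported for the cardinal arithmetic of HOL-Cardinals. *)
unbundle cardinal_syntax

section \<open>Convergence along a well-order\<close>

definition eventually_along :: "'i rel \<Rightarrow> ('i \<Rightarrow> bool) \<Rightarrow> bool" where
  "eventually_along r P \<longleftrightarrow> (\<exists>a0. \<forall>a. (a0, a) \<in> r \<and> a \<noteq> a0 \<longrightarrow> P a)"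

lemma kconv_iff_eventually_along:
  "kconv r x L \<longleftrightarrow> (\<forall>U. open U \<and> L \<in> U \<longrightarrow> eventually_along r (\<lambda>a. x a \<in> U))"
  by (simp add: kconv_def eventually_along_def)

lemma kconv_eventually_eq: "eventually_along r (\<lambda>a. x a = L) \<Longrightarrow> kconv r x L"
  unfolding kconv_iff_eventually_along eventually_along_def by metis

lemma kconv_const_imp_eq:
  fixes c L :: "'b::t1_space"
  assumes unbounded: "\<forall>a0. \<exists>a. (a0, a) \<in> r \<and> a \<noteq> a0" and "kconv r (\<lambda>_. c) L"
  shows "c = L"
proof (rule ccontr)
  assume "c \<noteq> L"
  then have "eventually_along r (\<lambda>_. c \<in> - {c})"
    using \<open>kconv r (\<lambda>_. c) L\<close> by (auto simp: kconv_iff_eventually_along)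
  then show False
    using unbounded by (auto simp: eventually_along_def)
qed

lemma zero_notin_ND: "(\<lambda>a t. 0) \<notin> ND r"
proof
  let ?L = "lebesgue_on {0..1::real}"
  assume "(\<lambda>a t. 0) \<in> ND r"
  then obtain f :: "real \<Rightarrow> real" where f: "AE t in ?L. kconv r (\<lambda>a. 0) (f t)"
    and not_L1: "\<not> kconv r (\<lambda>a. LINT t|?L. \<bar>f t\<bar>) 0"
    unfolding ND_def by auto
  show False
  proof (cases "\<forall>a0. \<exists>a. (a0, a) \<in> r \<and> a \<noteq> a0")
    case True
    from f have "AE t in ?L. f t = 0"
      by eventually_elim (rule kconv_const_imp_eq[OF True, symmetric])
    then have "(LINT t|?L. \<bar>f t\<bar>) = 0"
      by (simp add: integral_eq_zero_AE)
    then show False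
      using not_L1 by (simp add: kconv_def)
  next
    case False
    then show False
      using not_L1 by (auto simp: kconv_iff_eventually_along eventually_along_def)
  qed
qed

lemma card_order_unbounded:
  assumes "card_order r" "infinite (UNIV :: 'i set)"
  shows "\<forall>a0::'i. \<exists>a. (a0, a) \<in> r \<and> a \<noteq> a0"
proof (rule ccontr)
  assume "\<not> ?thesis"
  then obtain a0 where top: "\<And>a. (a0, a) \<in> r \<Longrightarrow> a = a0" by blast
  have r: "Card_order r" "Field r = UNIV"
    using card_order_on_Card_order[OF assms(1)] by auto
  have "refl_on UNIV r" "total_on UNIV r"
    using assms(1) unfolding card_order_on_def well_order_on_def linear_order_on_def
      partial_order_on_def preorder_on_def by auto
  then have "(b, a0) \<in> r" for b
    using top unfolding total_on_def refl_on_def by (metis UNIV_I)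
  then have "Field r = under r a0"
    using r(2) by (auto simp: under_def)
  then show False
    using Card_order_infinite_not_under[OF r(1)] assms(2) r(2) by auto
qed

section \<open>An exhaustion of the unit interval by null sets\<close>

lemma exists_in_unit_interval_notin_null:
  assumes "N \<in> null_sets lebesgue"
  obtains t :: real where "t \<in> {0<..<1}" "t \<notin> N"
proof (rule ccontr)
  assume "\<not> thesis"
  with that have "{0<..<1} \<subseteq> N" by blast
  then have "negligible (box (0::real) 1)"
    using assms by (simp add: negligible_iff_null_sets null_sets_subset)
  then show False
    using negligible_interval(2)[of "0::real" 1] by simp
qed

lemma infinite_if_covN:
  assumes "is_covN (UNIV :: 'i set)"
  shows "infinite (UNIV :: 'i set)"
proof
  assume "finite (UNIV :: 'i set)"
  obtain F where F: "F \<subseteq> nullsets01" "\<Union>F = {0..1}" "|F| =o |UNIV :: 'i set|"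
    using assms unfolding is_covN_def by blast
  then have "finite F"
    using card_of_ordIso_finite[OF F(3)] \<open>finite (UNIV :: 'i set)\<close> by simp
  then have "negligible (\<Union>F)"
    by (rule negligible_Union) (use F(1) in \<open>auto simp: nullsets01_def negligible_iff_null_sets\<close>)
  then have "{0..1::real} \<in> null_sets lebesgue"
    using F(2) by (simp add: negligible_iff_null_sets)
  then obtain t :: real where "t \<in> {0<..<1}" "t \<notin> {0..1}"
    by (rule exists_in_unit_interval_notin_null)
  then show False by simp
qed

lemma null_exhaustion_of_unit_interval:
  fixes r :: "'i rel"
  assumes r: "card_order r" and add: "is_addN (UNIV :: 'i set)" and cov: "is_covN (UNIV :: 'i set)"
  obtains B :: "'i \<Rightarrow> real set"
  where "\<And>a. B a \<in> null_sets lebesgue"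
    and "\<And>t. t \<in> {0..1} \<Longrightarrow> eventually_along r (\<lambda>a. t \<in> B a)"
proof -
  obtain F where F: "F \<subseteq> nullsets01" "\<Union>F = {0..1}" "|F| =o |UNIV :: 'i set|"
    using cov unfolding is_covN_def by blast
  then obtain e where e: "bij_betw e (UNIV :: 'i set) F"
    using card_of_ordIso ordIso_symmetric by blast
  define B where "B a = \<Union> (e ` underS r a)" for a
  have Card_order_r: "Card_order r" and Field_r: "Field r = UNIV"
    using card_order_on_Card_order[OF r] by auto
  have add_N: "\<And>G. G \<subseteq> nullsets01 \<Longrightarrow> |G| <o |UNIV :: 'i set| \<Longrightarrow> \<Union>G \<in> nullsets01"
    using add unfolding is_addN_def by blast
  have "B a \<in> nullsets01" for a
  proof -
    have "|underS r a| <o r"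
      using card_of_underS[OF Card_order_r] Field_r by simp
    then have "|underS r a| <o |UNIV :: 'i set|"
      using card_of_unique[OF r] by (rule ordLess_ordIso_trans)
    then have "|e ` underS r a| <o |UNIV :: 'i set|"
      by (rule ordLeq_ordLess_trans[OF card_of_image])
    moreover have "e ` underS r a \<subseteq> nullsets01"
      using e F(1) by (auto simp: bij_betw_def)
    ultimately show ?thesis
      unfolding B_def by (rule add_N[rotated])
  qed
  then have "B a \<in> null_sets lebesgue" for a
    by (simp add: nullsets01_def)
  moreover have "eventually_along r (\<lambda>a. t \<in> B a)" if "t \<in> {0..1}" for t
  proof -
    have "range e = F"
      using e by (simp add: bij_betw_def)
    then have "t \<in> \<Union>(range e)"
      using that F(2) by simp
    then obtain b where "t \<in> e b" by blast
    then show ?thesis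
      unfolding eventually_along_def B_def underS_def by blast
  qed
  ultimately show thesis using that by blast
qed

section \<open>Masked continuous functions in \<open>ND\<close>\<close>

lemma integral_abs_pos_if_continuous:
  fixes q :: "real \<Rightarrow> real"
  assumes q: "continuous_on {a..b} q" and t0: "t0 \<in> {a<..<b}" "q t0 \<noteq> 0"
  shows "0 < (LINT t|lebesgue_on {a..b}. \<bar>q t\<bar>)"
proof -
  define I where "I = (LINT t|lebesgue_on {a..b}. \<bar>q t\<bar>)"
  have cont: "continuous_on (cbox a b) (\<lambda>t. \<bar>q t\<bar>)"
    using continuous_on_rabs[OF q] by simp
  have "integrable (lebesgue_on {a..b}) (\<lambda>t. \<bar>q t\<bar>)"
    using continuous_on_rabs[OF q] by (rule continuous_imp_integrable_real)
  then have integral: "((\<lambda>t. \<bar>q t\<bar>) has_integral I) (cbox a b)"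
    unfolding I_def using has_integral_integral_lebesgue_on[of "{a..b}"] by simp
  have "I \<noteq> 0"
  proof
    assume "I = 0"
    have "box a b \<noteq> {}" "t0 \<in> cbox a b" using t0(1) by auto
    with \<open>I = 0\<close> have "\<bar>q t0\<bar> = 0"
      using has_integral_0_cbox_imp_0[OF cont _ _ _ , of t0] integral by simp
    then show False using t0(2) by simp
  qed
  moreover have "0 \<le> I"
    unfolding I_def by simp
  ultimately show ?thesis
    unfolding I_def by linarith
qed

lemma masked_continuous_in_ND:
  fixes B :: "'i \<Rightarrow> real set" and q :: "real \<Rightarrow> real"
  assumes null: "\<And>a. B a \<in> null_sets lebesgue"
    and exhausts: "\<And>t. t \<in> {0..1} \<Longrightarrow> eventually_along r (\<lambda>a. t \<in> B a)"
    and unbounded: "\<forall>a0. \<exists>a. (a0, a) \<in> r \<and> a \<noteq> a0"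
    and q: "continuous_on {0..1} q" "t0 \<in> {0<..<1}" "q t0 \<noteq> 0"
  shows "(\<lambda>a t. if t \<in> {0..1} \<and> t \<notin> B a then q t else 0) \<in> ND r"
proof -
  let ?L = "lebesgue_on {0..1::real}"
  define P where "P a t = (if t \<in> {0..1} \<and> t \<notin> B a then q t else 0)" for a t
  define I where "I = (LINT t|?L. \<bar>q t\<bar>)"
  have int_q: "integrable ?L q"
    using q(1) by (rule continuous_imp_integrable_real)
  have null_L: "{0..1} \<inter> B a \<in> null_sets ?L" for a
  proof -
    have "{0..1} \<inter> B a \<in> null_sets lebesgue"
      by (rule null_set_Int1[OF null]) simp
    then show ?thesis by (simp add: null_sets_restrict_space)
  qed
  have meas_P: "P a \<in> borel_measurable ?L" for a
  proof -
    have "{0..1} \<inter> B a \<inter> space ?L = {0..1} \<inter> B a"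
      by auto
    then have "(\<lambda>t. if t \<in> {0..1} \<inter> B a then 0 else q t) \<in> borel_measurable ?L"
      using null_setsD2[OF null_L[of a]]
      by (intro measurable_If_set borel_measurable_const borel_measurable_integrable[OF int_q]) simp
    then show ?thesis
      by (rule measurable_cong[THEN iffD1, rotated]) (simp add: P_def)
  qed
  have "AE t in ?L. \<bar>P a t\<bar> = \<bar>q t\<bar>" for a
    using AE_not_in[OF null_L[of a]] AE_space by eventually_elim (simp add: P_def)
  then have L1_norm: "(LINT t|?L. \<bar>P a t\<bar>) = I" for a
    unfolding I_def using meas_P int_q by (intro integral_cong_AE) auto
  have "0 < I"
    unfolding I_def by (rule integral_abs_pos_if_continuous[OF q])
  have not_L1: "\<not> kconv r (\<lambda>a. LINT t|?L. \<bar>P a t - 0\<bar>) 0"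
  proof
    assume "kconv r (\<lambda>a. LINT t|?L. \<bar>P a t - 0\<bar>) 0"
    then have "kconv r (\<lambda>_. I) 0" by (simp add: L1_norm)
    then have "I = 0" by (rule kconv_const_imp_eq[OF unbounded])
    with \<open>0 < I\<close> show False by simp
  qed
  have pointwise: "kconv r (\<lambda>a. P a t) 0" if "t \<in> {0..1}" for t
    using exhausts[OF that] by (intro kconv_eventually_eq) (auto simp: eventually_along_def P_def)
  have "P \<in> ND r"
    unfolding ND_def
  proof (intro CollectI conjI allI exI)
    show "P a \<in> borel_measurable ?L" for a by (rule meas_P)
    show "integrable ?L (\<lambda>t. \<bar>q t\<bar>)" using int_q by simp
    show "AE t in ?L. \<bar>P a t\<bar> \<le> \<bar>q t\<bar>" for a by (simp add: P_def)
    show "integrable ?L (\<lambda>t. 0 :: real)" by simp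
    show "AE t in ?L. kconv r (\<lambda>a. P a t) 0"
      using AE_space by eventually_elim (simp add: pointwise)
    show "\<not> kconv r (\<lambda>a. LINT t|?L. \<bar>P a t - 0\<bar>) 0" by (rule not_L1)
  qed
  then show ?thesis by (simp add: P_def[abs_def])
qed

section \<open>A continuum of integrally independent reals\<close>

definition int_independent_on :: "'a set \<Rightarrow> ('a \<Rightarrow> real) \<Rightarrow> bool" where
  "int_independent_on X \<xi> \<longleftrightarrow>
     (\<forall>T u. finite T \<and> T \<subseteq> X \<and> (\<Sum>g\<in>T. real_of_int (u g) * \<xi> g) = 0 \<longrightarrow> (\<forall>g\<in>T. u g = 0))"

lemma int_independent_onD:
  "int_independent_on X \<xi> \<Longrightarrow> finite T \<Longrightarrow> T \<subseteq> X \<Longrightarrow>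
    (\<Sum>g\<in>T. real_of_int (u g) * \<xi> g) = 0 \<Longrightarrow> g \<in> T \<Longrightarrow> u g = 0"
  unfolding int_independent_on_def by blast

lemma int_independent_on_image:
  assumes "inj_on f A" "int_independent_on A \<xi>"
  shows "int_independent_on (f ` A) (\<xi> \<circ> the_inv_into A f)"
  unfolding int_independent_on_def
proof (intro allI impI ballI)
  fix T u g
  assume T: "finite T \<and> T \<subseteq> f ` A \<and> (\<Sum>g\<in>T. real_of_int (u g) * (\<xi> \<circ> the_inv_into A f) g) = 0"
    and "g \<in> T"
  define T' where "T' = the_inv_into A f ` T"
  have "the_inv_into A f g \<in> A \<and> f (the_inv_into A f g) = g" if "g \<in> T" for g
    using T that assms(1) by (auto intro: the_inv_into_into f_the_inv_into_f)
  then have T'A: "T' \<subseteq> A" and T_eq: "T = f ` T'"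
    unfolding T'_def by (auto simp: image_iff)
  have "inj_on f T'" using assms(1) T'A inj_on_subset by blast
  then have "(\<Sum>x\<in>T'. real_of_int (u (f x)) * \<xi> x) = 0"
    using T T'A assms(1) by (simp add: T_eq sum.reindex subset_iff the_inv_into_f_f)
  moreover obtain x where "x \<in> T'" "g = f x" using \<open>g \<in> T\<close> T_eq by blast
  ultimately show "u g = 0"
    using int_independent_onD[OF assms(2), of T' "u \<circ> f"] T T'A by (auto simp: T'_def)
qed

lemma card_of_UNIV_real_le_rat_spanning:
  fixes B :: "real set"
  assumes "\<And>y. \<exists>T u. finite T \<and> T \<subseteq> B \<and> (\<Sum>v\<in>T. real_of_rat (u v) * v) = y"
  shows "|UNIV :: real set| \<le>o |B|"
proof -
  define \<phi> where "\<phi> S = (\<Sum>p\<in>S. real_of_rat (fst p) * snd p)" for S :: "(rat \<times> real) set"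
  have onto: "UNIV \<subseteq> \<phi> ` Fpow (UNIV \<times> B)"
  proof
    fix y :: real
    obtain T u where T: "finite T" "T \<subseteq> B" "(\<Sum>v\<in>T. real_of_rat (u v) * v) = y"
      using assms by blast
    have "inj_on (\<lambda>v. (u v, v)) T" by (auto simp: inj_on_def)
    then have "\<phi> ((\<lambda>v. (u v, v)) ` T) = y" using T by (simp add: \<phi>_def sum.reindex)
    moreover have "(\<lambda>v. (u v, v)) ` T \<in> Fpow (UNIV \<times> B)" using T by (auto simp: Fpow_def)
    ultimately show "y \<in> \<phi> ` Fpow (UNIV \<times> B)" by blast
  qed
  have "infinite B"
  proof
    assume "finite B"
    then have "countable (Fpow ((UNIV :: rat set) \<times> B))"
      by (intro countable_Fpow countable_SIGMA) (auto intro: countable_finite)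
    then show False
      using onto uncountable_UNIV_real by (metis countable_image countable_subset)
  qed
  have "|UNIV :: real set| \<le>o |Fpow ((UNIV :: rat set) \<times> B)|"
    using card_of_mono1[OF onto] card_of_image ordLeq_transitive by blast
  also have "|Fpow ((UNIV :: rat set) \<times> B)| =o |(UNIV :: rat set) \<times> B|"
    using \<open>infinite B\<close> by (intro card_of_Fpow_infinite) (force simp: finite_cartesian_product_iff)
  also have "|(UNIV :: rat set) \<times> B| =o |B|"
  proof -
    have "|UNIV :: rat set| \<le>o |B|"
      using \<open>infinite B\<close> infinite_iff_card_of_countable[of "UNIV :: rat set" B]
      by (simp add: infinite_UNIV_char_0)
    then show ?thesis using card_of_Times_infinite[OF \<open>infinite B\<close> UNIV_not_empty] by blast
  qed
  finally show ?thesis .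
qed

lemma exists_int_independent_continuum:
  obtains H :: "real set" where "int_independent_on H id" "|H| =o |UNIV :: real set|"
proof -
  interpret Q: vector_space "\<lambda>q (x::real). real_of_rat q * x"
    by unfold_locales (auto simp: algebra_simps of_rat_add of_rat_mult)
  obtain B where B: "Q.independent B" "UNIV \<subseteq> Q.span B"
    by (rule Q.basis_exists[of UNIV])
  have "int_independent_on B id"
    unfolding int_independent_on_def
  proof (intro allI impI ballI)
    fix T u g
    assume T: "finite T \<and> T \<subseteq> B \<and> (\<Sum>g\<in>T. real_of_int (u g) * id g) = 0" and "g \<in> T"
    then have "(\<Sum>v\<in>T. real_of_rat (of_int (u v)) * v) = 0" by simp
    then show "u g = 0"
      using Q.independentD[OF B(1), of T "\<lambda>v. of_int (u v)" g] T \<open>g \<in> T\<close> by simp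
  qed
  moreover have "|UNIV :: real set| \<le>o |B|"
  proof (rule card_of_UNIV_real_le_rat_spanning)
    fix y :: real
    have "y \<in> Q.span B" using B(2) by blast
    then show "\<exists>T u. finite T \<and> T \<subseteq> B \<and> (\<Sum>v\<in>T. real_of_rat (u v) * v) = y"
      unfolding Q.span_explicit by blast
  qed
  then have "|B| =o |UNIV :: real set|" by (simp add: ordIso_iff_ordLeq)
  ultimately show thesis using that by blast
qed

section \<open>Polynomials in exponential generators\<close>

lemma exp_sums_linearly_independent:
  fixes c w :: "'m \<Rightarrow> real"
  assumes "finite M" "inj_on w M" "a < b"
    and "\<And>t. t \<in> {a<..<b} \<Longrightarrow> (\<Sum>m\<in>M. c m * exp (w m * t)) = 0"
  shows "\<forall>m\<in>M. c m = 0"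
  using assms
proof (induction M arbitrary: c rule: finite_induct)
  case empty
  then show ?case by simp
next
  case (insert \<mu> M)
  \<comment> \<open>multiplying by \<open>exp (- w \<mu> * t)\<close> and differentiating kills the \<open>\<mu>\<close>-term
    and scales the others by \<open>w m - w \<mu> \<noteq> 0\<close>\<close>
  define h where "h t = (\<Sum>m\<in>insert \<mu> M. c m * exp ((w m - w \<mu>) * t))" for t
  define h' where "h' t = (\<Sum>m\<in>insert \<mu> M. c m * (w m - w \<mu>) * exp ((w m - w \<mu>) * t))" for t
  have h_eq: "h t = exp (- w \<mu> * t) * (\<Sum>m\<in>insert \<mu> M. c m * exp (w m * t))" for t
    unfolding h_def sum_distrib_left by (intro sum.cong refl) (simp add: mult_exp_exp algebra_simps)
  have h'_eq: "h' t = exp (- w \<mu> * t) * (\<Sum>m\<in>M. (c m * (w m - w \<mu>)) * exp (w m * t))" for t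
    unfolding h'_def sum_distrib_left using insert.hyps
    by (simp, intro sum.cong refl) (simp add: mult_exp_exp algebra_simps)
  have "((\<lambda>t. c m * exp ((w m - w \<mu>) * t)) has_field_derivative
      c m * (w m - w \<mu>) * exp ((w m - w \<mu>) * t)) (at t)" for m t
    by (auto intro!: derivative_eq_intros)
  then have deriv: "(h has_field_derivative h' t) (at t)" for t
    unfolding h_def h'_def by (rule DERIV_sum)
  have h0: "h t = 0" if "t \<in> {a<..<b}" for t
    using h_eq insert.prems(3) that by simp
  have "h' t = 0" if t: "t \<in> {a<..<b}" for t
  proof (rule DERIV_local_const[OF deriv, where d="min (t - a) (b - t)"])
    show "0 < min (t - a) (b - t)" using t by auto
    show "\<forall>y. \<bar>t - y\<bar> < min (t - a) (b - t) \<longrightarrow> h t = h y"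
      using t h0 by (auto simp: abs_less_iff)
  qed
  then have "\<forall>m\<in>M. c m * (w m - w \<mu>) = 0"
    using insert.IH[of "\<lambda>m. c m * (w m - w \<mu>)"] insert.prems h'_eq by (simp add: inj_on_insert)
  moreover have "w m \<noteq> w \<mu>" if "m \<in> M" for m
    using insert.prems(1) insert.hyps(2) that by (auto simp: inj_on_def)
  ultimately have cM: "\<forall>m\<in>M. c m = 0" by simp
  have "c \<mu> * exp (w \<mu> * ((a + b) / 2)) = 0"
    using insert.prems(3)[of "(a + b) / 2"] insert.prems(2) insert.hyps cM by simp
  then show ?case using cM by simp
qed

definition frequency :: "('g \<Rightarrow> real) \<Rightarrow> ('g \<Rightarrow> nat) \<Rightarrow> real" where
  "frequency \<xi> m = (\<Sum>g | m g \<noteq> 0. real (m g) * \<xi> g)"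

lemma frequency_eq_sum:
  "finite T \<Longrightarrow> {g. m g \<noteq> 0} \<subseteq> T \<Longrightarrow> frequency \<xi> m = (\<Sum>g\<in>T. real (m g) * \<xi> g)"
  unfolding frequency_def by (rule sum.mono_neutral_left) auto

lemma inj_on_frequency:
  assumes "int_independent_on X \<xi>"
  shows "inj_on (frequency \<xi>) {m. finite {g. m g \<noteq> 0} \<and> {g. m g \<noteq> 0} \<subseteq> X}"
proof (rule inj_onI)
  fix m m'
  assume m: "m \<in> {m. finite {g. m g \<noteq> 0} \<and> {g. m g \<noteq> 0} \<subseteq> X}"
    and m': "m' \<in> {m. finite {g. m g \<noteq> 0} \<and> {g. m g \<noteq> 0} \<subseteq> X}"
    and eq: "frequency \<xi> m = frequency \<xi> m'"
  define T where "T = {g. m g \<noteq> 0} \<union> {g. m' g \<noteq> 0}"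
  have T: "finite T" "T \<subseteq> X" using m m' by (auto simp: T_def)
  have "(\<Sum>g\<in>T. real_of_int (int (m g) - int (m' g)) * \<xi> g) = frequency \<xi> m - frequency \<xi> m'"
    using T by (simp add: frequency_eq_sum[of T] T_def left_diff_distrib sum_subtractf)
  then have "int (m g) - int (m' g) = 0" if "g \<in> T" for g
    using int_independent_onD[OF assms T, of "\<lambda>g. int (m g) - int (m' g)"] eq that by simp
  then have "m g = m' g" for g
    by (cases "g \<in> T") (auto simp: T_def)
  then show "m = m'" ..
qed

lemma exists_exp_polynomial_nonzero:
  assumes c: "nonconst_poly_over X c" and "int_independent_on X \<xi>"
  shows "\<exists>t\<in>{0<..<1}. (\<Sum>m | c m \<noteq> 0. c m * exp (frequency \<xi> m * t)) \<noteq> 0"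
proof (rule ccontr)
  assume vanish: "\<not> ?thesis"
  have M: "finite {m. c m \<noteq> 0}" "{m. c m \<noteq> 0} \<noteq> {}"
    and supp: "{m. c m \<noteq> 0} \<subseteq> {m. finite {g. m g \<noteq> 0} \<and> {g. m g \<noteq> 0} \<subseteq> X}"
    using c unfolding nonconst_poly_over_def by auto
  have "inj_on (frequency \<xi>) {m. c m \<noteq> 0}"
    by (rule inj_on_subset[OF inj_on_frequency[OF assms(2)] supp])
  then have "\<forall>m\<in>{m. c m \<noteq> 0}. c m = 0"
    by (rule exp_sums_linearly_independent[OF M(1) _ zero_less_one]) (use vanish in blast)
  then show False
    using M(2) by auto
qed

lemma poly_eval_masked_exponentials:
  assumes c: "nonconst_poly_over X c"
    and X: "\<And>g a t. g \<in> X \<Longrightarrow> g a t = (if t \<in> D a then exp (\<xi> g * t) else 0)"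
  shows "poly_eval c a t =
    (if t \<in> D a then (\<Sum>m | c m \<noteq> 0. c m * exp (frequency \<xi> m * t)) else 0)"
proof (cases "t \<in> D a")
  case True
  have "(\<Prod>g | m g \<noteq> 0. g a t ^ m g) = exp (frequency \<xi> m * t)" if "c m \<noteq> 0" for m
  proof -
    have supp: "finite {g. m g \<noteq> 0}" "{g. m g \<noteq> 0} \<subseteq> X"
      using c that unfolding nonconst_poly_over_def by auto
    have "g a t ^ m g = exp (real (m g) * \<xi> g * t)" if "m g \<noteq> 0" for g
      using X[of g] supp that True by (auto simp: exp_of_nat_mult[symmetric] mult.assoc)
    then have "(\<Prod>g | m g \<noteq> 0. g a t ^ m g) = (\<Prod>g | m g \<noteq> 0. exp (real (m g) * \<xi> g * t))"
      by (intro prod.cong refl) simp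
    also have "\<dots> = exp (frequency \<xi> m * t)"
      using supp by (simp add: frequency_def exp_sum sum_distrib_right)
    finally show ?thesis .
  qed
  then show ?thesis
    using True by (simp add: poly_eval_def)
next
  case False
  \<comment> \<open>no constant term: every monomial contains a generator, and all generators vanish here\<close>
  have "(\<Prod>g | m g \<noteq> 0. g a t ^ m g) = 0" if "c m \<noteq> 0" for m
  proof -
    have supp: "finite {g. m g \<noteq> 0}" "{g. m g \<noteq> 0} \<noteq> {}" "{g. m g \<noteq> 0} \<subseteq> X"
      using c that unfolding nonconst_poly_over_def by auto
    then obtain g where g: "m g \<noteq> 0" "g \<in> X" by auto
    then have "g a t = 0" using X[of g a t] False by simp
    then have "g a t ^ m g = 0" using g(1) by simp
    then show ?thesis
      using g(1) by (intro prod_zero[OF supp(1)] bexI[of _ g]) simp_all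
  qed
  then show ?thesis
    using False by (simp add: poly_eval_def)
qed

lemma exists_exponential_generators:
  fixes B :: "'i \<Rightarrow> real set"
  assumes null: "\<And>a. B a \<in> null_sets lebesgue"
  obtains X :: "('i \<Rightarrow> real \<Rightarrow> real) set" and \<xi>
  where "|X| =o |UNIV :: real set|" and "int_independent_on X \<xi>"
    and "\<And>g a t. g \<in> X \<Longrightarrow> g a t = (if t \<in> {0..1} - B a then exp (\<xi> g * t) else 0)"
proof -
  obtain H where H: "int_independent_on H id" "|H| =o |UNIV :: real set|"
    by (rule exists_int_independent_continuum)
  define G where "G x a t = (if t \<in> {0..1} - B a then exp (x * t) else 0)" for x a t
  have inj: "inj_on G H"
  proof (rule inj_onI)
    fix x y assume "G x = G y"
    obtain t :: real where t: "t \<in> {0<..<1}" "t \<notin> B undefined"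
      using exists_in_unit_interval_notin_null[OF null] by blast
    from \<open>G x = G y\<close> have "G x undefined t = G y undefined t" by simp
    then have "exp (x * t) = exp (y * t)" using t by (simp add: G_def)
    then show "x = y" using t by simp
  qed
  have "|H| =o |G ` H|"
    using card_of_ordIso inj_on_imp_bij_betw[OF inj] by blast
  then have card: "|G ` H| =o |UNIV :: real set|"
    using ordIso_symmetric ordIso_transitive H(2) by blast
  have indep: "int_independent_on (G ` H) (the_inv_into H G)"
    using int_independent_on_image[OF inj H(1)] by simp
  have gens: "g a t = (if t \<in> {0..1} - B a then exp (the_inv_into H G g * t) else 0)"
    if "g \<in> G ` H" for g a t
    using that inj by (auto simp: the_inv_into_f_f G_def)
  show thesis
    by (rule that[OF card indep gens])
qed

theorem mainTheorem14:
  fixes r :: "'i rel"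
  assumes "card_order r"
    and "is_addN (UNIV :: 'i set)"
    and "is_covN (UNIV :: 'i set)"
  shows "strongly_c_algebrable (ND r)"
proof -
  obtain B :: "'i \<Rightarrow> real set" where null: "\<And>a. B a \<in> null_sets lebesgue"
    and exhausts: "\<And>t. t \<in> {0..1} \<Longrightarrow> eventually_along r (\<lambda>a. t \<in> B a)"
    using null_exhaustion_of_unit_interval[OF assms] by blast
  have unbounded: "\<forall>a0. \<exists>a. (a0, a) \<in> r \<and> a \<noteq> a0"
    using card_order_unbounded[OF assms(1) infinite_if_covN[OF assms(3)]] .
  obtain X \<xi> where card: "|X| =o |UNIV :: real set|" and indep: "int_independent_on X \<xi>"
    and gens: "\<And>g a t. g \<in> X \<Longrightarrow> g a t = (if t \<in> {0..1} - B a then exp (\<xi> g * t) else 0)"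
    using exists_exponential_generators[of B, OF null] by metis
  show ?thesis
    unfolding strongly_c_algebrable_def
  proof (intro exI[of _ X] conjI allI impI ballI card)
    show "g a t = 0" if "g \<in> X" "t \<notin> {0..1}" for g a t
      using gens[OF that(1)] that(2) by auto
  next
    fix c assume c: "nonconst_poly_over X c"
    define q where "q t = (\<Sum>m | c m \<noteq> 0. c m * exp (frequency \<xi> m * t))" for t
    have "poly_eval c = (\<lambda>a t. if t \<in> {0..1} \<and> t \<notin> B a then q t else 0)"
      using poly_eval_masked_exponentials[OF c gens] by (simp add: q_def fun_eq_iff)
    moreover obtain t0 where "t0 \<in> {0<..<1}" "q t0 \<noteq> 0"
      using exists_exp_polynomial_nonzero[OF c indep] by (auto simp: q_def)
    moreover have "continuous_on {0..1} q"
      unfolding q_def by (intro continuous_intros)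
    ultimately have "poly_eval c \<in> ND r"
      using masked_continuous_in_ND[OF null exhausts unbounded] by simp
    moreover have "poly_eval c \<noteq> (\<lambda>a t. 0)"
      using \<open>poly_eval c \<in> ND r\<close> zero_notin_ND by metis
    ultimately show "poly_eval c \<in> ND r" "\<exists>a t. poly_eval c a t \<noteq> 0"
      by (auto simp: fun_eq_iff)
  qed
qed

end
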